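(* Let $p\ge 5$ and let $g_{j,k}\in\{1,-1\}$ for $j=1,2$ and $1\le k\le p-4$. Put $\beta_j=\sigma_1^{g_{j,1}}\sigma_2^{g_{j,2}}\cdots\sigma_{p-5}^{g_{j,p-5}}$ for $j=1,2$. Then \[\beta_1\sigma_{p-4}^{g_{1,p-4}}\sigma_{p-3}\sigma_{p-2}\sigma_{p-1}^{-1}\,\beta_2\sigma_{p-4}^{g_{2,p-4}}\sigma_{p-3}\sigma_{p-2}^{-1}\sigma_{p-1}^{-1}\ \sim_M\ \beta_1\beta_2.\]
   Context: $\sigma_1,\sigma_2,\dots$ denote the standard Artin generators of the braid groups. Two braids (possibly with different numbers of strands) are Markov equivalent, written $\sim_M$, if their closures are isotopic links. *)

theory Defs
  imports Main
begin

text \<open>Braid words: a letter (i, True) is sigma_i, (i, False) is sigma_i^{-1}.\<close>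
type_synonym bword = "(nat \<times> bool) list"

definition valid_word :: "nat \<Rightarrow> bword \<Rightarrow> bool" where
  "valid_word n w \<longleftrightarrow> (\<forall>(i, b) \<in> set w. 1 \<le> i \<and> i < n)"

definition sig :: "nat \<Rightarrow> int \<Rightarrow> bword" where
  "sig i e = (if 0 \<le> e then replicate (nat e) (i, True) else replicate (nat (- e)) (i, False))"

inductive braid_eq :: "nat \<Rightarrow> bword \<Rightarrow> bword \<Rightarrow> bool" for n where
  refl: "braid_eq n w w"
| sym: "braid_eq n w w' \<Longrightarrow> braid_eq n w' w"
| trans: "braid_eq n u v \<Longrightarrow> braid_eq n v w \<Longrightarrow> braid_eq n u w"
| free: "1 \<le> i \<Longrightarrow> i < n \<Longrightarrow> braid_eq n (u @ [(i, b), (i, \<not> b)] @ v) (u @ v)"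
| rel_adj: "1 \<le> i \<Longrightarrow> i + 1 < n \<Longrightarrow>
    braid_eq n (u @ [(i, True), (i + 1, True), (i, True)] @ v)
               (u @ [(i + 1, True), (i, True), (i + 1, True)] @ v)"
| rel_far: "1 \<le> i \<Longrightarrow> i + 1 < j \<Longrightarrow> j < n \<Longrightarrow>
    braid_eq n (u @ [(i, True), (j, True)] @ v) (u @ [(j, True), (i, True)] @ v)"

text \<open>Markov equivalence of braids (n strands, word), generated by equality in B_n,
  conjugation and (positive/negative) stabilization. By Markov's theorem this is
  exactly isotopy of the closures.\<close>
inductive markov_eq :: "nat \<times> bword \<Rightarrow> nat \<times> bword \<Rightarrow> bool" (infix "\<sim>\<^sub>M" 50) where
  braid: "1 \<le> n \<Longrightarrow> valid_word n w \<Longrightarrow> valid_word n w' \<Longrightarrow> braid_eq n w w' \<Longrightarrow> (n, w) \<sim>\<^sub>M (n, w')"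
| conj: "1 \<le> n \<Longrightarrow> valid_word n u \<Longrightarrow> valid_word n w \<Longrightarrow> (n, u @ w) \<sim>\<^sub>M (n, w @ u)"
| stab: "1 \<le> n \<Longrightarrow> valid_word n w \<Longrightarrow> (n, w) \<sim>\<^sub>M (Suc n, w @ [(n, b)])"
| sym: "x \<sim>\<^sub>M y \<Longrightarrow> y \<sim>\<^sub>M x"
| trans: "x \<sim>\<^sub>M y \<Longrightarrow> y \<sim>\<^sub>M z \<Longrightarrow> x \<sim>\<^sub>M z"

end

theory Submission
  imports Defs
begin

(* Write s_i for sigma_i, a = p - 4 and e_j = s_a^(g j a), so that b_j = beta_j lies in B_a.
   Four times in a row, the top generator s_(m+1) is brought down to a single occurrence using
   only that it commutes with B_m and a braid relation between s_m and s_(m+1); a conjugation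
   then moves it to the end and a destabilisation removes it:

     b1 e1 s(a+1) s(a+2) s(a+3)^-1 b2 e2 s(a+1) s(a+2)^-1 s(a+3)^-1     on a + 4 strands
     ~ s(a+2)^-1 b1 e1 s(a+1) s(a+2) b2 e2 s(a+1) s(a+2)^-1             on a + 3 strands
     ~ s(a+1)^-2 b2 e2 s(a+1) b1 e1 s(a+1)                               on a + 2 strands
     ~ s(a)^-1 b1 e1 b2 s(a)                                             on a + 1 strands
     ~ b1 b2                                                             on a strands *)

section \<open>Braid words\<close>

lemma valid_word_Nil [simp]: "valid_word n []"
  by (simp add: valid_word_def)

lemma valid_word_Cons [simp]: "valid_word n (x # w) \<longleftrightarrow> 1 \<le> fst x \<and> fst x < n \<and> valid_word n w"
  by (cases x) (auto simp: valid_word_def)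

lemma valid_word_append [simp]: "valid_word n (u @ w) \<longleftrightarrow> valid_word n u \<and> valid_word n w"
  by (auto simp: valid_word_def)

lemma valid_word_concat [simp]: "valid_word n (concat ws) \<longleftrightarrow> (\<forall>w \<in> set ws. valid_word n w)"
  by (auto simp: valid_word_def)

lemma valid_word_mono: "valid_word m w \<Longrightarrow> m \<le> n \<Longrightarrow> valid_word n w"
  by (auto simp: valid_word_def)

lemma valid_word_sig: "1 \<le> i \<Longrightarrow> i < n \<Longrightarrow> valid_word n (sig i e)"
  by (simp add: valid_word_def sig_def)

lemma sig_unit: "e \<in> {1, -1} \<Longrightarrow> sig i e = [(i, e = 1)]"
  by (auto simp: sig_def)

definition inv_word :: "bword \<Rightarrow> bword" where
  "inv_word w = rev (map (\<lambda>(i, b). (i, \<not> b)) w)"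

lemma inv_word_simps [simp]:
  "inv_word [] = []"
  "inv_word (x # w) = inv_word w @ [(fst x, \<not> snd x)]"
  "inv_word (u @ w) = inv_word w @ inv_word u"
  by (auto simp: inv_word_def case_prod_beta)

lemma inv_word_inv_word [simp]: "inv_word (inv_word w) = w"
  by (induction w) auto

lemma valid_word_inv_word [simp]: "valid_word n (inv_word w) \<longleftrightarrow> valid_word n w"
  by (induction w) auto

section \<open>Equality in the braid group\<close>

declare braid_eq.trans [trans]

lemma braid_eq_valid_word: "braid_eq n w w' \<Longrightarrow> valid_word n w \<longleftrightarrow> valid_word n w'"
  by (induction rule: braid_eq.induct) auto

lemma braid_eq_context: "braid_eq n v v' \<Longrightarrow> braid_eq n (u @ v @ w) (u @ v' @ w)"
proof (induction rule: braid_eq.induct)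
  case (free i u' b v')
  then show ?case using braid_eq.free[of i n "u @ u'" b "v' @ w"] by simp
next
  case (rel_adj i u' v')
  then show ?case using braid_eq.rel_adj[of i n "u @ u'" "v' @ w"] by simp
next
  case (rel_far i j u' v')
  then show ?case using braid_eq.rel_far[of i j n "u @ u'" "v' @ w"] by simp
next
  case sym
  show ?case by (rule braid_eq.sym[OF sym.IH])
next
  case trans
  show ?case by (rule braid_eq.trans[OF trans.IH])
qed (rule braid_eq.refl)

lemma braid_eq_cancel: "valid_word n w \<Longrightarrow> braid_eq n (w @ inv_word w) []"
proof (induction w)
  case Nil
  then show ?case by (simp add: braid_eq.refl)
next
  case (Cons x w)
  obtain i b where x: "x = (i, b)" by (cases x)
  have ih: "braid_eq n (w @ inv_word w) []"
    using Cons by simp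
  have "braid_eq n ((x # w) @ inv_word (x # w)) [(i, b), (i, \<not> b)]"
    using braid_eq_context[OF ih, of "[x]" "[(i, \<not> b)]"] x by simp
  also have "braid_eq n [(i, b), (i, \<not> b)] []"
    using braid_eq.free[of i n "[]" b "[]"] Cons.prems x by simp
  finally show ?case .
qed

lemma braid_eq_move_left:
  assumes "valid_word n u" "braid_eq n (u @ v) w"
  shows "braid_eq n v (inv_word u @ w)"
proof -
  have "braid_eq n (inv_word u @ u) []"
    using braid_eq_cancel[of n "inv_word u"] assms(1) by simp
  from braid_eq_context[OF braid_eq.sym[OF this], of "[]" v]
  have "braid_eq n v (inv_word u @ u @ v)" by simp
  also have "braid_eq n (inv_word u @ u @ v) (inv_word u @ w)"
    using braid_eq_context[OF assms(2), of "inv_word u" "[]"] by simp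
  finally show ?thesis .
qed

lemma braid_eq_move_right:
  assumes "valid_word n u" "braid_eq n (v @ u) w"
  shows "braid_eq n v (w @ inv_word u)"
proof -
  from braid_eq_context[OF braid_eq.sym[OF braid_eq_cancel[OF assms(1)]], of v "[]"]
  have "braid_eq n v (v @ u @ inv_word u)" by simp
  also have "braid_eq n (v @ u @ inv_word u) (w @ inv_word u)"
    using braid_eq_context[OF assms(2), of "[]" "inv_word u"] by simp
  finally show ?thesis .
qed

lemma braid_eq_inv_word:
  assumes "valid_word n w" "valid_word n w'" "braid_eq n w w'"
  shows "braid_eq n (inv_word w) (inv_word w')"
proof -
  from braid_eq_context[OF braid_eq.sym[OF assms(3)], of "[]" "inv_word w"]
  have "braid_eq n (w' @ inv_word w) (w @ inv_word w)" by simp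
  also have "braid_eq n (w @ inv_word w) []"
    using assms(1) by (rule braid_eq_cancel)
  finally show ?thesis
    using braid_eq_move_left[OF assms(2), of "inv_word w" "[]"] by simp
qed

lemma braid_eq_commute_inv_word:
  assumes "valid_word n x" "braid_eq n (x @ y) (y @ x)"
  shows "braid_eq n (inv_word x @ y) (y @ inv_word x)"
proof -
  have "braid_eq n y (inv_word x @ y @ x)"
    using braid_eq_move_left[OF assms] by simp
  then have "braid_eq n ((inv_word x @ y) @ x) y"
    by (simp add: braid_eq.sym)
  from braid_eq_move_right[OF assms(1) this] show ?thesis .
qed

lemma braid_eq_far:
  assumes "1 \<le> i" "i + 1 < j" "j < n"
  shows "braid_eq n [(i, b), (j, c)] [(j, c), (i, b)]"
proof -
  have ij: "braid_eq n ([(i, True)] @ [(j, True)]) ([(j, True)] @ [(i, True)])"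
    using braid_eq.rel_far[OF assms, of "[]" "[]"] by simp
  have "braid_eq n ([(i, b)] @ [(j, True)]) ([(j, True)] @ [(i, b)])"
    using ij braid_eq_commute_inv_word[OF _ ij] assms by (cases b) auto
  then have "braid_eq n ([(j, c)] @ [(i, b)]) ([(i, b)] @ [(j, c)])"
    using braid_eq_commute_inv_word[of n "[(j, True)]" "[(i, b)]"] assms
    by (cases c) (simp_all add: braid_eq.sym)
  then show ?thesis by (simp add: braid_eq.sym)
qed

lemma braid_eq_commute_word:
  assumes "valid_word m w" "m < j" "j < n"
  shows "braid_eq n ((j, c) # w) (w @ [(j, c)])"
  using assms(1)
proof (induction w)
  case Nil
  then show ?case by (simp add: braid_eq.refl)
next
  case (Cons x w)
  obtain i b where x: "x = (i, b)" by (cases x)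
  have "braid_eq n [(j, c), (i, b)] [(i, b), (j, c)]"
    by (rule braid_eq.sym[OF braid_eq_far]) (use Cons.prems x assms in auto)
  from braid_eq_context[OF this, of "[]" w]
  have "braid_eq n ((j, c) # x # w) ((i, b) # (j, c) # w)" using x by simp
  also have "braid_eq n ((i, b) # (j, c) # w) ((i, b) # w @ [(j, c)])"
    using braid_eq_context[OF Cons.IH, of "[(i, b)]" "[]"] Cons.prems x by simp
  finally show ?case using x by simp
qed

lemma braid_eq_rel_adj_inv:
  "1 \<le> i \<Longrightarrow> i + 1 < n \<Longrightarrow>
    braid_eq n [(i + 1, False), (i, False), (i + 1, False)] [(i, False), (i + 1, False), (i, False)]"
  using braid_eq_inv_word[OF _ _ braid_eq.rel_adj[of i n "[]" "[]"]] by (simp add: braid_eq.sym)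

lemma braid_eq_conj_adj:
  assumes "1 \<le> i" "i + 1 < n"
  shows "braid_eq n [(i + 1, False), (i, s), (i + 1, True)] [(i, True), (i + 1, s), (i, False)]"
proof -
  have "braid_eq n ([(i + 1, True)] @ [(i, True), (i + 1, True)]) [(i, True), (i + 1, True), (i, True)]"
    using braid_eq.rel_adj[OF assms, of "[]" "[]"] by (simp add: braid_eq.sym)
  then have "braid_eq n ([(i + 1, False), (i, True), (i + 1, True)] @ [(i, True)]) [(i, True), (i + 1, True)]"
    using braid_eq_move_left[of n "[(i + 1, True)]"] assms by (simp add: braid_eq.sym)
  then have pos: "braid_eq n [(i + 1, False), (i, True), (i + 1, True)] [(i, True), (i + 1, True), (i, False)]"
    using braid_eq_move_right[of n "[(i, True)]" "[(i + 1, False), (i, True), (i + 1, True)]"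
        "[(i, True), (i + 1, True)]"] assms
    by simp
  show ?thesis
    using pos braid_eq_inv_word[OF _ _ pos] assms by (cases s) simp_all
qed

section \<open>Markov moves\<close>

declare markov_eq.trans [trans]

lemma markov_eq_of_braid_eq:
  "1 \<le> n \<Longrightarrow> valid_word n w \<Longrightarrow> braid_eq n w w' \<Longrightarrow> (n, w) \<sim>\<^sub>M (n, w')"
  using markov_eq.braid braid_eq_valid_word by blast

lemma markov_eq_destabilize:
  assumes "1 \<le> n" "valid_word n u" "valid_word n v" "braid_eq (n + 1) w (u @ (n, b) # v)"
  shows "(n + 1, w) \<sim>\<^sub>M (n, v @ u)"
proof -
  have valid: "valid_word (n + 1) (u @ (n, b) # v)"
    using assms(1-3) valid_word_mono[of n _ "n + 1"] by simp
  have "(n + 1, w) \<sim>\<^sub>M (n + 1, (u @ [(n, b)]) @ v)"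
    using markov_eq_of_braid_eq[of "n + 1"] assms(4) valid braid_eq_valid_word[OF assms(4)] by simp
  also have "\<dots> \<sim>\<^sub>M (n + 1, v @ u @ [(n, b)])"
    using markov_eq.conj[of "n + 1" "u @ [(n, b)]" v] valid by simp
  also have "\<dots> \<sim>\<^sub>M (n, v @ u)"
    using markov_eq.sym[OF markov_eq.stab[of n "v @ u" b]] assms by simp
  finally show ?thesis .
qed

lemma markov_eq_destab_twice_inverse:
  assumes "1 \<le> m" "valid_word m C1" "valid_word m C2"
  shows "(m + 2, C1 @ [(m, True), (m + 1, False)] @ C2 @ [(m, False), (m + 1, False)])
    \<sim>\<^sub>M (m + 1, (m, False) # C1 @ (m, True) # C2 @ [(m, False)])"
proof -
  have "braid_eq (m + 2) (C1 @ [(m, True), (m + 1, False)] @ C2 @ [(m, False), (m + 1, False)])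
      (C1 @ [(m, True)] @ C2 @ [(m + 1, False), (m, False), (m + 1, False)])"
    using braid_eq_context[OF braid_eq_commute_word[OF assms(3), of "m + 1" "m + 2" False],
        of "C1 @ [(m, True)]" "[(m, False), (m + 1, False)]"] by simp
  also have "braid_eq (m + 2) \<dots> (C1 @ [(m, True)] @ C2 @ [(m, False), (m + 1, False), (m, False)])"
    using braid_eq_context[OF braid_eq_rel_adj_inv[OF assms(1), of "m + 2"],
        of "C1 @ [(m, True)] @ C2" "[]"] by simp
  finally show ?thesis
    using markov_eq_destabilize[where n = "m + 1" and u = "C1 @ (m, True) # C2 @ [(m, False)]"
        and v = "[(m, False)]" and b = False] assms valid_word_mono[of m _ "m + 1"] by simp
qed

lemma markov_eq_destab_inverse_conjugate:
  assumes "1 \<le> m" "valid_word m D1" "valid_word m D2"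
  shows "(m + 2, (m + 1, False) # D1 @ [(m, True), (m + 1, True)]
      @ D2 @ [(m, True), (m + 1, False)])
    \<sim>\<^sub>M (m + 1, [(m, False), (m, False)] @ D2 @ [(m, True)] @ D1 @ [(m, True)])"
proof -
  have valid: "valid_word (m + 1) D1" "valid_word (m + 1) D2"
    "valid_word (m + 2) D1" "valid_word (m + 2) D2"
    using assms(2,3) by (auto intro: valid_word_mono)
  have "braid_eq (m + 2) ((m + 1, False) # D1 @ [(m, True), (m + 1, True)])
      (D1 @ [(m + 1, False), (m, True), (m + 1, True)])"
    using braid_eq_context[OF braid_eq_commute_word[OF assms(2), of "m + 1" "m + 2" False],
        of "[]" "[(m, True), (m + 1, True)]"] by simp
  also have "braid_eq (m + 2) \<dots> (D1 @ [(m, True), (m + 1, True), (m, False)])"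
    using braid_eq_context[OF braid_eq_conj_adj[OF assms(1), of "m + 2" True], of D1 "[]"] by simp
  finally have twist: "braid_eq (m + 2) ((m + 1, False) # D1 @ [(m, True), (m + 1, True)])
      (D1 @ [(m, True), (m + 1, True), (m, False)])" .
  have "(m + 2, (m + 1, False) # D1 @ [(m, True), (m + 1, True)] @ D2 @ [(m, True), (m + 1, False)])
      \<sim>\<^sub>M (m + 2, D1 @ [(m, True), (m + 1, True), (m, False)] @ D2 @ [(m, True), (m + 1, False)])"
    using braid_eq_context[OF twist, of "[]" "D2 @ [(m, True), (m + 1, False)]"]
      markov_eq_of_braid_eq[of "m + 2"] valid assms(1) by simp
  also have "\<dots> \<sim>\<^sub>M
      (m + 2, (m + 1, False) # D1 @ [(m, True), (m + 1, True), (m, False)] @ D2 @ [(m, True)])"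
    using markov_eq.conj[of "m + 2" "D1 @ [(m, True), (m + 1, True), (m, False)] @ D2 @ [(m, True)]"
        "[(m + 1, False)]"] valid assms(1) by simp
  also have "\<dots> \<sim>\<^sub>M (m + 1, [(m, False), (m, False)] @ D2 @ [(m, True)] @ D1 @ [(m, True)])"
    using markov_eq_destabilize[where n = "m + 1" and u = "D1 @ [(m, True)]"
        and v = "[(m, False), (m, False)] @ D2 @ [(m, True)]" and b = True]
      braid_eq_context[OF twist, of "[]" "(m, False) # D2 @ [(m, True)]"] valid assms(1) by simp
  finally show ?thesis .
qed

lemma markov_eq_destab_square_inverse:
  assumes "1 \<le> m" "valid_word m E1" "valid_word m E2"
  shows "(m + 2, [(m + 1, False), (m + 1, False)] @ E2 @ [(m, s2), (m + 1, True)]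
      @ E1 @ [(m, s1), (m + 1, True)])
    \<sim>\<^sub>M (m + 1, (m, False) # E1 @ [(m, s1)] @ E2 @ [(m, True)])"
proof -
  have valid: "valid_word (m + 1) E1" "valid_word (m + 1) E2"
    "valid_word (m + 2) E1" "valid_word (m + 2) E2"
    using assms(2,3) by (auto intro: valid_word_mono)
  have "braid_eq (m + 2)
      ([(m + 1, True), (m + 1, False), (m + 1, False)] @ E2 @ [(m, s2), (m + 1, True)] @ E1 @ [(m, s1)])
      ((m + 1, False) # E2 @ [(m, s2), (m + 1, True)] @ E1 @ [(m, s1)])"
    using braid_eq.free[of "m + 1" "m + 2" "[]" True] by simp
  also have "braid_eq (m + 2) \<dots> (E2 @ [(m + 1, False), (m, s2), (m + 1, True)] @ E1 @ [(m, s1)])"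
    using braid_eq_context[OF braid_eq_commute_word[OF assms(3), of "m + 1" "m + 2" False],
        of "[]" "[(m, s2), (m + 1, True)] @ E1 @ [(m, s1)]"] by simp
  also have "braid_eq (m + 2) \<dots> (E2 @ [(m, True), (m + 1, s2), (m, False)] @ E1 @ [(m, s1)])"
    using braid_eq_context[OF braid_eq_conj_adj[OF assms(1), of "m + 2" s2], of E2 "E1 @ [(m, s1)]"]
    by simp
  finally have untwist: "braid_eq (m + 2)
      ([(m + 1, True), (m + 1, False), (m + 1, False)] @ E2 @ [(m, s2), (m + 1, True)] @ E1 @ [(m, s1)])
      (E2 @ [(m, True), (m + 1, s2), (m, False)] @ E1 @ [(m, s1)])" .
  have "(m + 2, [(m + 1, False), (m + 1, False)] @ E2 @ [(m, s2), (m + 1, True)]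
        @ E1 @ [(m, s1), (m + 1, True)])
      \<sim>\<^sub>M (m + 2, [(m + 1, True), (m + 1, False), (m + 1, False)] @ E2 @ [(m, s2), (m + 1, True)]
        @ E1 @ [(m, s1)])"
    using markov_eq.conj[of "m + 2"
        "[(m + 1, False), (m + 1, False)] @ E2 @ [(m, s2), (m + 1, True)] @ E1 @ [(m, s1)]"
        "[(m + 1, True)]"] valid assms(1) by simp
  also have "\<dots> \<sim>\<^sub>M (m + 1, (m, False) # E1 @ [(m, s1)] @ E2 @ [(m, True)])"
    using markov_eq_destabilize[where n = "m + 1" and u = "E2 @ [(m, True)]"
        and v = "(m, False) # E1 @ [(m, s1)]" and b = s2] untwist valid assms(1) by simp
  finally show ?thesis .
qed

lemma markov_eq_destab_conjugate:
  assumes "1 \<le> m" "valid_word m E1" "valid_word m E2"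
  shows "(m + 1, (m, False) # E1 @ (m, s) # E2 @ [(m, True)]) \<sim>\<^sub>M (m, E1 @ E2)"
proof -
  have valid: "valid_word (m + 1) E1" "valid_word (m + 1) E2"
    using assms(2,3) by (auto intro: valid_word_mono)
  have "(m + 1, (m, False) # E1 @ (m, s) # E2 @ [(m, True)])
      \<sim>\<^sub>M (m + 1, E1 @ (m, s) # E2 @ [(m, True), (m, False)])"
    using markov_eq.conj[of "m + 1" "[(m, False)]" "E1 @ (m, s) # E2 @ [(m, True)]"] valid assms(1) by simp
  also have "\<dots> \<sim>\<^sub>M (m, E2 @ E1)"
    using markov_eq_destabilize[where n = m and u = E1 and v = E2 and b = s]
      braid_eq.free[of m "m + 1" "E1 @ (m, s) # E2" True "[]"] assms by simp
  also have "\<dots> \<sim>\<^sub>M (m, E1 @ E2)"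
    using markov_eq.conj[of m E2 E1] assms by simp
  finally show ?thesis .
qed

lemma markov_eq_remove_four_strands:
  assumes "1 \<le> a" "valid_word a B1" "valid_word a B2"
  shows "(a + 4, B1 @ [(a, s1), (a + 1, True), (a + 2, True), (a + 3, False)]
      @ B2 @ [(a, s2), (a + 1, True), (a + 2, False), (a + 3, False)]) \<sim>\<^sub>M (a, B1 @ B2)"
proof -
  have valid: "valid_word (a + 1) B1" "valid_word (a + 1) B2"
    "valid_word (a + 2) B1" "valid_word (a + 2) B2"
    using assms(2,3) by (auto intro: valid_word_mono)
  have "(a + 4, B1 @ [(a, s1), (a + 1, True), (a + 2, True), (a + 3, False)]
      @ B2 @ [(a, s2), (a + 1, True), (a + 2, False), (a + 3, False)])
      \<sim>\<^sub>M (a + 3, (a + 2, False) # B1 @ [(a, s1), (a + 1, True), (a + 2, True)]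
      @ B2 @ [(a, s2), (a + 1, True), (a + 2, False)])"
    using markov_eq_destab_twice_inverse[of "a + 2" "B1 @ [(a, s1), (a + 1, True)]"
        "B2 @ [(a, s2), (a + 1, True)]"] valid assms(1) by (simp add: numeral_eq_Suc)
  also have "\<dots> \<sim>\<^sub>M (a + 2, [(a + 1, False), (a + 1, False)] @ B2 @ [(a, s2), (a + 1, True)]
      @ B1 @ [(a, s1), (a + 1, True)])"
    using markov_eq_destab_inverse_conjugate[of "a + 1" "B1 @ [(a, s1)]" "B2 @ [(a, s2)]"]
      valid assms(1) by (simp add: numeral_eq_Suc)
  also have "\<dots> \<sim>\<^sub>M (a + 1, (a, False) # B1 @ [(a, s1)] @ B2 @ [(a, True)])"
    using markov_eq_destab_square_inverse[OF assms] by simp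
  also have "\<dots> \<sim>\<^sub>M (a, B1 @ B2)"
    using markov_eq_destab_conjugate[OF assms] by simp
  finally show ?thesis .
qed

theorem lemma3p3:
  fixes p :: nat and g :: "nat \<Rightarrow> nat \<Rightarrow> int"
  assumes "p \<ge> 5"
    and "\<forall>j \<in> {1, 2}. \<forall>k \<in> {1..p - 4}. g j k \<in> {1, -1}"
  shows "let \<beta> = (\<lambda>j. concat (map (\<lambda>k. sig k (g j k)) [1..<p - 4])) in
    (p, \<beta> 1 @ sig (p - 4) (g 1 (p - 4)) @ sig (p - 3) 1 @ sig (p - 2) 1 @ sig (p - 1) (-1)
        @ \<beta> 2 @ sig (p - 4) (g 2 (p - 4)) @ sig (p - 3) 1 @ sig (p - 2) (-1) @ sig (p - 1) (-1))
    \<sim>\<^sub>M (p - 4, \<beta> 1 @ \<beta> 2)"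
proof -
  define a where "a = p - 4"
  have a: "1 \<le> a"
    and indices: "p = a + 4" "p - 4 = a" "p - 3 = a + 1" "p - 2 = a + 2" "p - 1 = a + 3"
    using assms(1) by (simp_all add: a_def)
  have "g 1 a \<in> {1, -1}" "g 2 a \<in> {1, -1}"
    using assms(2) a by (auto simp: a_def)
  note letters = sig_unit[OF this(1)] sig_unit[OF this(2)]
    sig_unit[of 1, simplified] sig_unit[of "-1", simplified]
  have valid: "valid_word a (concat (map (\<lambda>k. sig k (g j k)) [1..<a]))" for j
    by (simp add: valid_word_sig)
  show ?thesis
    using markov_eq_remove_four_strands[OF a valid[of 1] valid[of 2], of "g 1 a = 1" "g 2 a = 1"]
    unfolding Let_def indices(2-5) letters by (simp add: indices(1))
qed

end
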